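(* Let $\iota:\mathrm{Aut}(T,\mathbf r)\to\mathrm S_n$ send an automorphism $f$ to the permutation of $\underline n$ which, for each leaf $(1,L)$, maps $L$ onto $L'$, where $f(1,L)=(1,L')$, by the unique order-preserving bijection. Then $\iota$ is an injective group morphism into $\operatorname{Stab}_{W_{\mathfrak g}}(\mathbf U)$ whose image meets $W_{\mathfrak h_1}$ trivially and normalises it, and the resulting injective group morphism $$\mathrm{Aut}(T,\mathbf r)\ltimes W_{\mathfrak h_1}\to\operatorname{Stab}_{W_{\mathfrak g}}(\mathbf U),\qquad (f,w)\mapsto\iota(f)\,w,$$ is surjective.
   Context: Let $n\ge2$, $\mathfrak g=\mathfrak{sl}_n(\mathbb C)$, $\mathfrak t=\{x\in\mathbb C^n:\sum x_a=0\}$, $W_{\mathfrak g}=\mathrm S_n$ permuting coordinates. Fix $p\ge1$, $A_1,\dots,A_p\in\mathfrak t$. For $l\in\{1,\dots,p+1\}$ let $P_l$ be the partition of $\underline n=\{1,\dots,n\}$ in which $a,b$ lie in the same part iff $(A_j)_a=(A_j)_b$ for all $l\le j\le p$ ($P_{p+1}=\{\underline n\}$). $W_{\mathfrak h_1}=\prod_{L\in P_1}\mathrm S_L\subseteq\mathrm S_n$. $U_l=\{x\in\mathfrak t:x_a=x_b$ whenever $a,b$ in the same part of $P_l\}$, and $\operatorname{Stab}_{W_{\mathfrak g}}(\mathbf U)=\{w\in\mathrm S_n:w(U_l)\subseteq U_l\ \forall l\le p\}$ (the paper also denotes this group $\widetilde{\mathrm{Aut}}(T,\mathbf r)$). Ranked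 fission tree $(T,\mathbf r)$: nodes are pairs $(l,L)$, $L$ a part of $P_l$; root $(p+1,\underline n)$; parent of $(l,L)$ is $(l+1,L')$ with $L\subseteq L'\in P_{l+1}$; rank $\mathbf r(l,L)=|L|$. $\mathrm{Aut}(T,\mathbf r)$ is the group of bijections of the node set fixing the root, commuting with the parent map and preserving ranks. The semidirect product uses the action of $\mathrm{Aut}(T,\mathbf r)$ on $W_{\mathfrak h_1}$ by conjugation through $\iota$. *)

theory Defs
  imports "HOL-Algebra.Sym_Groups" Complex_Main
begin

text \<open>Data: n, p, and A :: nat => nat => complex, where A j is the vector A_j
 (coordinates indexed by 1..n). Everything below is parametrised by n p A.\<close>

text \<open>The Cartan subalgebra t of sl_n: vectors on {1..n} (zero outside) with coordinate sum 0.\<close>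
definition tspace :: "nat \<Rightarrow> (nat \<Rightarrow> complex) set" where
  "tspace n = {x. (\<forall>a. a \<notin> {1..n} \<longrightarrow> x a = 0) \<and> (\<Sum>a=1..n. x a) = 0}"

definition lev_rel :: "nat \<Rightarrow> nat \<Rightarrow> (nat \<Rightarrow> nat \<Rightarrow> complex) \<Rightarrow> nat \<Rightarrow> (nat \<times> nat) set" where
  "lev_rel n p A l = {(a,b). a \<in> {1..n} \<and> b \<in> {1..n} \<and> (\<forall>j\<in>{l..p}. A j a = A j b)}"

definition part :: "nat \<Rightarrow> nat \<Rightarrow> (nat \<Rightarrow> nat \<Rightarrow> complex) \<Rightarrow> nat \<Rightarrow> nat set set" where
  "part n p A l = {1..n} // lev_rel n p A l"

definition tree_nodes :: "nat \<Rightarrow> nat \<Rightarrow> (nat \<Rightarrow> nat \<Rightarrow> complex) \<Rightarrow> (nat \<times> nat set) set" where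
  "tree_nodes n p A = {(l, L). l \<in> {1..p+1} \<and> L \<in> part n p A l}"

definition tree_root :: "nat \<Rightarrow> nat \<Rightarrow> nat \<times> nat set" where
  "tree_root n p = (p + 1, {1..n})"

definition tree_parent :: "nat \<Rightarrow> nat \<Rightarrow> (nat \<Rightarrow> nat \<Rightarrow> complex) \<Rightarrow> nat \<times> nat set \<Rightarrow> nat \<times> nat set" where
  "tree_parent n p A x = (fst x + 1, THE L'. L' \<in> part n p A (fst x + 1) \<and> snd x \<subseteq> L')"

definition tree_rank :: "nat \<times> nat set \<Rightarrow> nat" where
  "tree_rank x = card (snd x)"

definition tree_aut :: "nat \<Rightarrow> nat \<Rightarrow> (nat \<Rightarrow> nat \<Rightarrow> complex) \<Rightarrow> (nat \<times> nat set \<Rightarrow> nat \<times> nat set) set" where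
  "tree_aut n p A = {f. f permutes tree_nodes n p A \<and> f (tree_root n p) = tree_root n p \<and>
      (\<forall>x \<in> tree_nodes n p A - {tree_root n p}. tree_parent n p A (f x) = f (tree_parent n p A x)) \<and>
      (\<forall>x \<in> tree_nodes n p A. tree_rank (f x) = tree_rank x)}"

definition aut_group :: "nat \<Rightarrow> nat \<Rightarrow> (nat \<Rightarrow> nat \<Rightarrow> complex) \<Rightarrow> (nat \<times> nat set \<Rightarrow> nat \<times> nat set) monoid" where
  "aut_group n p A = \<lparr>carrier = tree_aut n p A, mult = (\<circ>), one = id\<rparr>"

text \<open>The unique order-preserving bijection L \<rightarrow> L' (finite sets of naturals of equal size),
 evaluated at a \<in> L: send the k-th smallest element of L to the k-th smallest of L'.\<close>
definition order_bij :: "nat set \<Rightarrow> nat set \<Rightarrow> nat \<Rightarrow> nat" where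
  "order_bij L L' a = sorted_list_of_set L' ! card {b \<in> L. b < a}"

definition leaf_part :: "nat \<Rightarrow> nat \<Rightarrow> (nat \<Rightarrow> nat \<Rightarrow> complex) \<Rightarrow> nat \<Rightarrow> nat set" where
  "leaf_part n p A a = (THE L. L \<in> part n p A 1 \<and> a \<in> L)"

definition iota :: "nat \<Rightarrow> nat \<Rightarrow> (nat \<Rightarrow> nat \<Rightarrow> complex) \<Rightarrow> (nat \<times> nat set \<Rightarrow> nat \<times> nat set) \<Rightarrow> nat \<Rightarrow> nat" where
  "iota n p A f = (\<lambda>a. if a \<in> {1..n}
      then order_bij (leaf_part n p A a) (snd (f (1, leaf_part n p A a))) a else a)"

definition Uspace :: "nat \<Rightarrow> nat \<Rightarrow> (nat \<Rightarrow> nat \<Rightarrow> complex) \<Rightarrow> nat \<Rightarrow> (nat \<Rightarrow> complex) set" where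
  "Uspace n p A l = {x \<in> tspace n. \<forall>L \<in> part n p A l. \<forall>a\<in>L. \<forall>b\<in>L. x a = x b}"

definition perm_act :: "(nat \<Rightarrow> nat) \<Rightarrow> (nat \<Rightarrow> complex) \<Rightarrow> (nat \<Rightarrow> complex)" where
  "perm_act w x = x \<circ> inv_into UNIV w"

definition stabU :: "nat \<Rightarrow> nat \<Rightarrow> (nat \<Rightarrow> nat \<Rightarrow> complex) \<Rightarrow> (nat \<Rightarrow> nat) set" where
  "stabU n p A = {w. w permutes {1..n} \<and> (\<forall>l \<in> {1..p}. perm_act w ` Uspace n p A l \<subseteq> Uspace n p A l)}"

text \<open>W_{h_1} = product of S_L over L \<in> P_1.\<close>
definition Wh1 :: "nat \<Rightarrow> nat \<Rightarrow> (nat \<Rightarrow> nat \<Rightarrow> complex) \<Rightarrow> (nat \<Rightarrow> nat) set" where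
  "Wh1 n p A = {w. w permutes {1..n} \<and> (\<forall>L \<in> part n p A 1. w ` L \<subseteq> L)}"

text \<open>Semidirect product Aut(T,r) \<ltimes> W_{h_1}, pairs (f,w) standing for iota(f) w:
 (f,w)(f',w') = (f f', (iota(f')^{-1} w iota(f')) w').\<close>
definition semidirect :: "nat \<Rightarrow> nat \<Rightarrow> (nat \<Rightarrow> nat \<Rightarrow> complex)
     \<Rightarrow> ((nat \<times> nat set \<Rightarrow> nat \<times> nat set) \<times> (nat \<Rightarrow> nat)) monoid" where
  "semidirect n p A = \<lparr>carrier = tree_aut n p A \<times> Wh1 n p A,
     mult = (\<lambda>(f, w) (f', w'). (f \<circ> f', (inv_into UNIV (iota n p A f') \<circ> w \<circ> iota n p A f') \<circ> w')),
     one = (id, id)\<rparr>"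

definition semidirect_map :: "nat \<Rightarrow> nat \<Rightarrow> (nat \<Rightarrow> nat \<Rightarrow> complex)
     \<Rightarrow> (nat \<times> nat set \<Rightarrow> nat \<times> nat set) \<times> (nat \<Rightarrow> nat) \<Rightarrow> nat \<Rightarrow> nat" where
  "semidirect_map n p A fw = iota n p A (fst fw) \<circ> snd fw"

end

theory Submission
  imports Defs
begin

text \<open>
An automorphism f of the ranked fission tree fixes the root and commutes with the parent map, so it
preserves levels and containment of blocks. Hence the order-preserving bijection \<iota>(f) sends each
block M of P_l into the block f(M); being injective, and f preserving ranks, it sends M onto f(M).
So f is determined by \<iota>(f), \<iota>(f) permutes the blocks of every P_l, and \<iota> is multiplicative
because order-preserving bijections compose.

A permutation stabilises U_l iff it permutes the blocks of P_l, since vectors of U_l separate any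
two distinct blocks. Every such s therefore induces a tree automorphism f_s (M \<mapsto> s M), and
\<iota>(f_s)\<inverse> s maps every leaf onto itself, i.e. lies in W_h1: this gives surjectivity.
An element of \<iota>(Aut) \<inter> W_h1 fixes every leaf, so it comes from the identity automorphism; this gives
injectivity of (f, w) \<mapsto> \<iota>(f) w, and the group axioms of the semidirect product are then pulled back
along this injective multiplicative map into S_n.
\<close>

section \<open>Order-preserving bijections between finite sets of naturals\<close>

lemma sorted_list_of_set_nth_less_eq_take:
  fixes L :: "nat set"
  assumes "finite L" "i < card L"
  shows "{b \<in> L. b < sorted_list_of_set L ! i} = set (take i (sorted_list_of_set L))"
proof -
  let ?xs = "sorted_list_of_set L"
  have less_iff: "?xs ! j < ?xs ! i \<longleftrightarrow> j < i" if "j < length ?xs" for j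
    using that assms sorted_wrt_nth_less[OF strict_sorted_list_of_set]
    by (metis length_sorted_list_of_set linorder_neqE_nat not_less_iff_gr_or_eq)
  have "b \<in> L \<longleftrightarrow> (\<exists>j < length ?xs. ?xs ! j = b)" for b
    using assms(1) by (metis in_set_conv_nth set_sorted_list_of_set)
  moreover have "b \<in> set (take i ?xs) \<longleftrightarrow> (\<exists>j < i. ?xs ! j = b)" for b
    using assms by (auto simp: in_set_conv_nth)
  ultimately show ?thesis
    using less_iff assms by auto (metis order.strict_trans)
qed

lemma card_less_sorted_list_of_set_nth:
  fixes L :: "nat set"
  assumes "finite L" "i < card L"
  shows "card {b \<in> L. b < sorted_list_of_set L ! i} = i"
  using assms by (simp add: sorted_list_of_set_nth_less_eq_take distinct_card)

lemma sorted_list_of_set_nth_card_less: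
  fixes L :: "nat set"
  assumes "finite L" "a \<in> L"
  shows "sorted_list_of_set L ! card {b \<in> L. b < a} = a"
proof -
  obtain i where "i < card L" "a = sorted_list_of_set L ! i"
    using assms by (metis in_set_conv_nth length_sorted_list_of_set set_sorted_list_of_set)
  then show ?thesis
    using card_less_sorted_list_of_set_nth assms(1) by simp
qed

lemma card_below_lt_card:
  fixes L :: "nat set"
  assumes "finite L" "a \<in> L"
  shows "card {b \<in> L. b < a} < card L"
  using assms by (intro psubset_card_mono) auto

lemma order_bij_in:
  assumes "finite L" "finite L'" "card L = card L'" "a \<in> L"
  shows "order_bij L L' a \<in> L'"
  using card_below_lt_card[OF assms(1,4)] assms(2,3)
  unfolding order_bij_def by (metis length_sorted_list_of_set nth_mem set_sorted_list_of_set)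

lemma order_bij_self:
  assumes "finite L" "a \<in> L"
  shows "order_bij L L a = a"
  unfolding order_bij_def using sorted_list_of_set_nth_card_less[OF assms] .

lemma order_bij_order_bij:
  assumes "finite L" "finite L'" "card L = card L'" "a \<in> L"
  shows "order_bij L' L'' (order_bij L L' a) = order_bij L L'' a"
  unfolding order_bij_def
  using card_below_lt_card[OF assms(1,4)] assms(2,3) by (simp add: card_less_sorted_list_of_set_nth)

lemma inj_on_order_bij:
  assumes "finite L" "finite L'" "card L = card L'"
  shows "inj_on (order_bij L L') L"
  by (rule inj_on_inverseI[where g = "order_bij L' L"])
    (simp add: assms order_bij_order_bij order_bij_self)

section \<open>The partitions P_l and the fission tree\<close>

locale fission_tree =
  fixes n p :: nat and A :: "nat \<Rightarrow> nat \<Rightarrow> complex"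
  assumes n_pos: "0 < n"
begin

abbreviation "R \<equiv> lev_rel n p A"
abbreviation "P \<equiv> part n p A"
abbreviation "block l a \<equiv> lev_rel n p A l `` {a}"
abbreviation "N \<equiv> tree_nodes n p A"
abbreviation "par \<equiv> tree_parent n p A"
abbreviation "rt \<equiv> tree_root n p"
abbreviation "Aut \<equiv> tree_aut n p A"
abbreviation "\<iota> \<equiv> iota n p A"
abbreviation "W \<equiv> Wh1 n p A"
abbreviation "U \<equiv> Uspace n p A"

lemma equiv_lev_rel: "equiv {1..n} (R l)"
  unfolding lev_rel_def equiv_def refl_on_def sym_def trans_def by auto

lemma lev_rel_mono: "l \<le> l' \<Longrightarrow> R l \<subseteq> R l'"
  unfolding lev_rel_def by auto

lemma lev_rel_subset: "R l \<subseteq> {1..n} \<times> {1..n}"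
  unfolding lev_rel_def by auto

lemma block_in_part: "a \<in> {1..n} \<Longrightarrow> block l a \<in> P l"
  unfolding part_def by (rule quotientI)

lemma block_self: "a \<in> {1..n} \<Longrightarrow> a \<in> block l a"
  unfolding lev_rel_def by auto

lemma part_eq_block:
  assumes "M \<in> P l" "a \<in> M"
  shows "M = block l a"
proof -
  obtain b where "M = block l b"
    using assms(1) unfolding part_def by (rule quotientE)
  then show ?thesis
    using assms(2) equiv_class_eq[OF equiv_lev_rel] by blast
qed

lemma part_subset: "M \<in> P l \<Longrightarrow> M \<subseteq> {1..n}"
  unfolding part_def using equiv_lev_rel by (meson in_quotient_imp_subset)

lemma part_nonempty: "M \<in> P l \<Longrightarrow> M \<noteq> {}"
  unfolding part_def using equiv_lev_rel by (meson in_quotient_imp_non_empty)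

lemma part_finite: "M \<in> P l \<Longrightarrow> finite M"
  using part_subset finite_subset by blast

lemma part_eqI: "M \<in> P l \<Longrightarrow> M' \<in> P l \<Longrightarrow> a \<in> M \<Longrightarrow> a \<in> M' \<Longrightarrow> M = M'"
  using part_eq_block by metis

lemma part_refines:
  assumes "M \<in> P l" "l \<le> l'" "M' \<in> P l'" "a \<in> M" "a \<in> M'"
  shows "M \<subseteq> M'"
  using part_eq_block[OF assms(1,4)] part_eq_block[OF assms(3,5)] lev_rel_mono[OF assms(2)] by auto

lemma part_top: "P (p + 1) = {{1..n}}"
proof -
  have "R (p + 1) = {1..n} \<times> {1..n}"
    unfolding lev_rel_def by auto
  moreover have "(1::nat) \<in> {1..n}"
    using n_pos by simp
  ultimately show ?thesis
    unfolding part_def quotient_def by auto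
qed

lemma leaf_part_eq: "a \<in> {1..n} \<Longrightarrow> leaf_part n p A a = block 1 a"
  unfolding leaf_part_def using block_in_part block_self part_eq_block by (intro the_equality) auto

lemma tree_nodes_iff: "(l, L) \<in> N \<longleftrightarrow> 1 \<le> l \<and> l \<le> p + 1 \<and> L \<in> P l"
  unfolding tree_nodes_def by auto

lemma finite_tree_nodes: "finite N"
proof (rule finite_subset)
  show "N \<subseteq> {1..p + 1} \<times> Pow {1..n}"
    unfolding tree_nodes_def using part_subset by auto
qed simp

lemma root_in_tree_nodes: "rt \<in> N"
  unfolding tree_root_def tree_nodes_iff using part_top by auto

lemma tree_node_eq_root_iff: "x \<in> N \<Longrightarrow> x = rt \<longleftrightarrow> fst x = p + 1"
  unfolding tree_root_def tree_nodes_def using part_top by auto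

lemma tree_parent_eq_block:
  assumes "L \<in> P l" "a \<in> L"
  shows "par (l, L) = (l + 1, block (l + 1) a)"
proof -
  have a: "a \<in> {1..n}"
    using part_subset assms by blast
  have "(THE L'. L' \<in> P (l + 1) \<and> L \<subseteq> L') = block (l + 1) a"
  proof (rule the_equality)
    show "block (l + 1) a \<in> P (l + 1) \<and> L \<subseteq> block (l + 1) a"
      using block_in_part[OF a] part_refines[OF assms(1) _ block_in_part[OF a] assms(2) block_self[OF a]]
      by simp
  qed (use part_eq_block assms(2) in blast)
  then show ?thesis
    unfolding tree_parent_def by simp
qed

lemma fst_tree_parent: "fst (par x) = fst x + 1"
  unfolding tree_parent_def by simp

lemma tree_parent_node:
  assumes "x \<in> N" "x \<noteq> rt"
  shows "par x \<in> N" "snd x \<subseteq> snd (par x)"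
proof -
  obtain l L where x: "x = (l, L)" "1 \<le> l" "l \<le> p" "L \<in> P l"
    using assms tree_node_eq_root_iff by (cases x) (fastforce simp: tree_nodes_iff)
  obtain a where a: "a \<in> L"
    using part_nonempty[OF x(4)] by auto
  then have "a \<in> {1..n}"
    using part_subset[OF x(4)] by blast
  then show "par x \<in> N" "snd x \<subseteq> snd (par x)"
    using tree_parent_eq_block[OF x(4) a] x block_in_part block_self a
      part_refines[OF x(4), of "l + 1"]
    by (auto simp: tree_nodes_iff)
qed

section \<open>Tree automorphisms and the leaf permutation \<iota>\<close>

lemma tree_autD:
  assumes "f \<in> Aut"
  shows "f permutes N" "f rt = rt" "\<And>x. x \<in> N \<Longrightarrow> x \<noteq> rt \<Longrightarrow> par (f x) = f (par x)"
    "\<And>x. x \<in> N \<Longrightarrow> card (snd (f x)) = card (snd x)"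
  using assms unfolding tree_aut_def tree_rank_def by auto

lemma tree_aut_in_tree_nodes: "f \<in> Aut \<Longrightarrow> x \<in> N \<Longrightarrow> f x \<in> N"
  by (simp add: permutes_in_image[OF tree_autD(1)])

lemma tree_aut_neq_root: "f \<in> Aut \<Longrightarrow> x \<noteq> rt \<Longrightarrow> f x \<noteq> rt"
  by (metis tree_autD(2) permutes_inj[OF tree_autD(1)] inj_eq)

lemma tree_aut_level:
  assumes f: "f \<in> Aut" and x: "x \<in> N"
  shows "fst (f x) = fst x"
proof -
  have level: "\<forall>x \<in> N. fst x + d = p + 1 \<longrightarrow> fst (f x) = fst x" for d
  proof (induction d)
    case 0
    show ?case
    proof (intro ballI impI)
      fix x assume "x \<in> N" "fst x + 0 = p + 1"
      then have "x = rt"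
        using tree_node_eq_root_iff by simp
      then show "fst (f x) = fst x"
        using tree_autD(2)[OF f] by simp
    qed
  next
    case (Suc d)
    show ?case
    proof (intro ballI impI)
      fix x assume x: "x \<in> N" "fst x + Suc d = p + 1"
      then have "x \<noteq> rt"
        using tree_node_eq_root_iff by auto
      then have "fst (f (par x)) = fst x + 1"
        using Suc.IH x tree_parent_node(1) fst_tree_parent by simp
      then show "fst (f x) = fst x"
        using tree_autD(3)[OF f x(1) \<open>x \<noteq> rt\<close>] fst_tree_parent[of "f x"] by simp
    qed
  qed
  have "fst x \<le> p + 1"
    using x by (cases x) (simp add: tree_nodes_iff)
  then show ?thesis
    using level[of "p + 1 - fst x"] x by simp
qed

lemma tree_aut_node:
  assumes "f \<in> Aut" "(l, M) \<in> N"
  obtains M' where "f (l, M) = (l, M')" "M' \<in> P l" "card M' = card M"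
proof
  show eq: "f (l, M) = (l, snd (f (l, M)))"
    using tree_aut_level[OF assms] prod.collapse[of "f (l, M)"] by simp
  have "f (l, M) \<in> N"
    using tree_aut_in_tree_nodes assms by blast
  then show "snd (f (l, M)) \<in> P l"
    by (subst (asm) eq) (simp add: tree_nodes_iff)
  show "card (snd (f (l, M))) = card M"
    using tree_autD(4)[OF assms] by simp
qed

lemma tree_aut_subset_parent:
  assumes f: "f \<in> Aut" and x: "x \<in> N" "x \<noteq> rt"
  shows "snd (f x) \<subseteq> snd (f (par x))"
  using tree_parent_node(2)[OF tree_aut_in_tree_nodes[OF f x(1)]]
    tree_aut_neq_root[OF f x(2)] tree_autD(3)[OF f x]
  by simp

lemma tree_aut_mono:
  assumes f: "f \<in> Aut" and L: "(l, L) \<in> N" and M: "(l', M) \<in> N" "l \<le> l'" "L \<subseteq> M"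
  shows "snd (f (l, L)) \<subseteq> snd (f (l', M))"
proof -
  have L': "L \<in> P l" "1 \<le> l"
    using L tree_nodes_iff by auto
  obtain a where a: "a \<in> L"
    using part_nonempty[OF L'(1)] by blast
  have a': "a \<in> {1..n}"
    using part_subset[OF L'(1)] a by blast
  have "\<forall>M. (l + d, M) \<in> N \<longrightarrow> L \<subseteq> M \<longrightarrow> snd (f (l, L)) \<subseteq> snd (f (l + d, M))" for d
  proof (induction d)
    case 0
    show ?case
    proof (intro allI impI)
      fix M assume "(l + 0, M) \<in> N" "L \<subseteq> M"
      then have "L = M"
        using part_eqI[OF L'(1), of M a] a by (auto simp: tree_nodes_iff)
      then show "snd (f (l, L)) \<subseteq> snd (f (l + 0, M))"
        by simp
    qed
  next
    case (Suc d)
    show ?case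
    proof (intro allI impI)
      fix M assume M: "(l + Suc d, M) \<in> N" "L \<subseteq> M"
      let ?x = "(l + d, block (l + d) a)"
      have "l + d \<le> p"
        using M by (simp add: tree_nodes_iff)
      then have x: "?x \<in> N" "?x \<noteq> rt"
        using L'(2) block_in_part[OF a'] by (auto simp: tree_nodes_iff tree_root_def)
      have "L \<subseteq> snd ?x"
        using part_refines[OF L'(1) _ block_in_part[OF a'] a block_self[OF a']] by simp
      have "par ?x = (l + Suc d, M)"
        using tree_parent_eq_block[OF block_in_part[OF a'] block_self[OF a']] M a
          part_eq_block[of M "l + Suc d" a]
        by (auto simp: tree_nodes_iff)
      then show "snd (f (l, L)) \<subseteq> snd (f (l + Suc d, M))"
        using Suc.IH x \<open>L \<subseteq> snd ?x\<close> tree_aut_subset_parent[OF f x(1,2)] by auto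
    qed
  qed
  from this[of "l' - l"] show ?thesis
    using M by simp
qed

lemma iota_eq_order_bij:
  "a \<in> {1..n} \<Longrightarrow> \<iota> f a = order_bij (block 1 a) (snd (f (1, block 1 a))) a"
  unfolding iota_def using leaf_part_eq by simp

lemma iota_outside: "a \<notin> {1..n} \<Longrightarrow> \<iota> f a = a"
  unfolding iota_def by auto

lemma leaf_in_tree_nodes: "a \<in> {1..n} \<Longrightarrow> (1, block 1 a) \<in> N"
  using block_in_part tree_nodes_iff by simp

lemma iota_in_tree_aut_image:
  assumes f: "f \<in> Aut" and M: "(l, M) \<in> N" and a: "a \<in> M"
  shows "\<iota> f a \<in> snd (f (l, M))"
proof -
  have l: "1 \<le> l" "M \<in> P l"
    using M by (auto simp: tree_nodes_iff)
  then have a': "a \<in> {1..n}"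
    using part_subset a by blast
  obtain L' where L': "f (1, block 1 a) = (1, L')" "L' \<in> P 1" "card L' = card (block 1 a)"
    using tree_aut_node[OF f leaf_in_tree_nodes[OF a']] .
  have "\<iota> f a = order_bij (block 1 a) L' a"
    using iota_eq_order_bij[OF a'] L'(1) by simp
  then have "\<iota> f a \<in> L'"
    using order_bij_in[OF part_finite[OF block_in_part[OF a']] part_finite[OF L'(2)] L'(3)[symmetric]
        block_self[OF a']]
    by simp
  moreover have "L' \<subseteq> snd (f (l, M))"
    using tree_aut_mono[OF f leaf_in_tree_nodes[OF a'] M l(1)] L'(1)
      part_refines[OF block_in_part[OF a'] l(1,2) block_self[OF a'] a]
    by simp
  ultimately show ?thesis
    by blast
qed

lemma iota_permutes:
  assumes f: "f \<in> Aut"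
  shows "\<iota> f permutes {1..n}"
proof (rule inj_imp_permutes)
  show "\<iota> f a \<in> {1..n}" if a: "a \<in> {1..n}" for a
  proof -
    obtain L' where "f (1, block 1 a) = (1, L')" "L' \<in> P 1"
      using tree_aut_node[OF f leaf_in_tree_nodes[OF a]] .
    then show ?thesis
      using iota_in_tree_aut_image[OF f leaf_in_tree_nodes[OF a] block_self[OF a]] part_subset[of L' 1]
      by auto
  qed
  show "inj_on (\<iota> f) {1..n}"
  proof (rule inj_onI)
    fix a b assume a: "a \<in> {1..n}" and b: "b \<in> {1..n}" and eq: "\<iota> f a = \<iota> f b"
    obtain La where La: "f (1, block 1 a) = (1, La)" "La \<in> P 1" "card La = card (block 1 a)"
      using tree_aut_node[OF f leaf_in_tree_nodes[OF a]] .
    obtain Lb where Lb: "f (1, block 1 b) = (1, Lb)" "Lb \<in> P 1"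
      using tree_aut_node[OF f leaf_in_tree_nodes[OF b]] .
    have "\<iota> f a \<in> La" "\<iota> f a \<in> Lb"
      using iota_in_tree_aut_image[OF f leaf_in_tree_nodes[OF a] block_self[OF a]]
        iota_in_tree_aut_image[OF f leaf_in_tree_nodes[OF b] block_self[OF b]] La(1) Lb(1) eq
      by simp_all
    then have "f (1, block 1 a) = f (1, block 1 b)"
      using part_eqI[OF La(2) Lb(2)] La(1) Lb(1) by simp
    then have same_leaf: "block 1 a = block 1 b"
      using permutes_inj[OF tree_autD(1)[OF f]] by (simp add: inj_eq)
    have "order_bij (block 1 a) La a = order_bij (block 1 a) La b"
      using eq iota_eq_order_bij[OF a] iota_eq_order_bij[OF b] La(1) same_leaf by simp
    then show "a = b"
      using inj_on_order_bij[OF part_finite[OF block_in_part[OF a]] part_finite[OF La(2)] La(3)[symmetric]]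
        block_self[OF a] block_self[OF b] same_leaf
      by (auto dest: inj_onD)
  qed
qed (simp_all add: iota_outside)

lemma tree_aut_eq_iota_image:
  assumes f: "f \<in> Aut" and M: "(l, M) \<in> N"
  shows "f (l, M) = (l, \<iota> f ` M)"
proof -
  obtain M' where M': "f (l, M) = (l, M')" "M' \<in> P l" "card M' = card M"
    using tree_aut_node[OF f M] .
  have "\<iota> f ` M \<subseteq> M'"
    using iota_in_tree_aut_image[OF f M] M'(1) by auto
  moreover have "card (\<iota> f ` M) = card M'"
    using M'(3) card_image permutes_inj_on[OF iota_permutes[OF f]] by metis
  ultimately show ?thesis
    using card_subset_eq[OF part_finite[OF M'(2)]] M'(1) by metis
qed

lemma iota_image_in_part: "f \<in> Aut \<Longrightarrow> (l, M) \<in> N \<Longrightarrow> \<iota> f ` M \<in> P l"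
  using tree_aut_eq_iota_image tree_aut_in_tree_nodes by (metis tree_nodes_iff)

lemma inj_on_iota: "inj_on \<iota> Aut"
proof (rule inj_onI)
  fix f g assume f: "f \<in> Aut" and g: "g \<in> Aut" and eq: "\<iota> f = \<iota> g"
  show "f = g"
  proof
    fix x
    show "f x = g x"
    proof (cases "x \<in> N")
      case True
      then show ?thesis
        using tree_aut_eq_iota_image[OF f] tree_aut_eq_iota_image[OF g] eq by (cases x) simp
    next
      case False
      then show ?thesis
        using permutes_not_in[OF tree_autD(1)[OF f]] permutes_not_in[OF tree_autD(1)[OF g]] by simp
    qed
  qed
qed

section \<open>The group Aut(T, r) and the morphism \<iota>\<close>

lemma id_in_tree_aut: "id \<in> Aut"
  unfolding tree_aut_def by simp

lemma tree_aut_comp: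
  assumes f: "f \<in> Aut" and g: "g \<in> Aut"
  shows "f \<circ> g \<in> Aut"
proof -
  have "par ((f \<circ> g) x) = (f \<circ> g) (par x)" if "x \<in> N" "x \<noteq> rt" for x
    using tree_autD(3)[OF f tree_aut_in_tree_nodes[OF g] tree_aut_neq_root[OF g]] tree_autD(3)[OF g]
      that by simp
  then show ?thesis
    unfolding tree_aut_def tree_rank_def
    using permutes_compose[OF tree_autD(1)[OF g] tree_autD(1)[OF f]] tree_autD(2,4)[OF f]
      tree_autD(2,4)[OF g] tree_aut_in_tree_nodes[OF g]
    by simp
qed

lemma tree_aut_inv:
  assumes f: "f \<in> Aut"
  shows "inv_into UNIV f \<in> Aut"
proof -
  have f_perm: "f permutes N"
    using tree_autD(1)[OF f] .
  have inv_perm: "inv_into UNIV f permutes N"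
    using permutes_inv[OF f_perm] .
  have "par (inv_into UNIV f x) = inv_into UNIV f (par x)" if x: "x \<in> N" "x \<noteq> rt" for x
  proof -
    have "inv_into UNIV f x \<in> N"
      using permutes_in_image[OF inv_perm] x(1) by simp
    moreover have "inv_into UNIV f x \<noteq> rt"
      using x(2) tree_autD(2)[OF f] permutes_inverses(1)[OF f_perm] by metis
    ultimately have "f (par (inv_into UNIV f x)) = par x"
      using tree_autD(3)[OF f, of "inv_into UNIV f x"] permutes_inverses(1)[OF f_perm] by simp
    then show ?thesis
      using permutes_inverses(2)[OF f_perm] by metis
  qed
  moreover have "card (snd (inv_into UNIV f x)) = card (snd x)" if "x \<in> N" for x
    using tree_autD(4)[OF f, of "inv_into UNIV f x"] permutes_in_image[OF inv_perm] that
      permutes_inverses(1)[OF f_perm]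
    by simp
  moreover have "inv_into UNIV f rt = rt"
    using permutes_inv_eq[OF f_perm] tree_autD(2)[OF f] by simp
  ultimately show ?thesis
    unfolding tree_aut_def tree_rank_def using inv_perm by simp
qed

lemma group_aut_group: "group (aut_group n p A)"
proof (rule groupI)
  show "\<exists>g \<in> carrier (aut_group n p A). g \<otimes>\<^bsub>aut_group n p A\<^esub> f = \<one>\<^bsub>aut_group n p A\<^esub>"
    if "f \<in> carrier (aut_group n p A)" for f
    using that tree_aut_inv permutes_inv_o(2)[OF tree_autD(1)] by (auto simp: aut_group_def)
qed (auto simp: aut_group_def id_in_tree_aut tree_aut_comp o_assoc)

lemma iota_comp:
  assumes f: "f \<in> Aut" and g: "g \<in> Aut"
  shows "\<iota> (f \<circ> g) = \<iota> f \<circ> \<iota> g"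
proof
  fix a
  show "\<iota> (f \<circ> g) a = (\<iota> f \<circ> \<iota> g) a"
  proof (cases "a \<in> {1..n}")
    case True
    let ?L = "block 1 a"
    obtain L' where L': "g (1, ?L) = (1, L')" "L' \<in> P 1" "card L' = card ?L"
      using tree_aut_node[OF g leaf_in_tree_nodes[OF True]] .
    have ga: "\<iota> g a \<in> L'"
      using iota_in_tree_aut_image[OF g leaf_in_tree_nodes[OF True] block_self[OF True]] L'(1) by simp
    then have ga': "\<iota> g a \<in> {1..n}" "block 1 (\<iota> g a) = L'"
      using part_subset[OF L'(2)] part_eq_block[OF L'(2)] by auto
    have "\<iota> (f \<circ> g) a = order_bij ?L (snd (f (1, L'))) a"
      using iota_eq_order_bij[OF True] L'(1) by simp
    also have "\<dots> = order_bij L' (snd (f (1, L'))) (order_bij ?L L' a)"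
      using order_bij_order_bij[OF part_finite[OF block_in_part[OF True]] part_finite[OF L'(2)]
          L'(3)[symmetric] block_self[OF True]]
      by simp
    also have "\<dots> = \<iota> f (\<iota> g a)"
      using iota_eq_order_bij[OF ga'(1)] iota_eq_order_bij[OF True] ga'(2) L'(1) by simp
    finally show ?thesis
      by simp
  qed (simp add: iota_outside)
qed

lemma iota_id: "\<iota> id = id"
proof
  fix a
  show "\<iota> id a = id a"
  proof (cases "a \<in> {1..n}")
    case True
    then show ?thesis
      using iota_eq_order_bij order_bij_self[OF part_finite[OF block_in_part[OF True]] block_self[OF True]]
      by simp
  qed (simp add: iota_outside)
qed

lemma iota_inv:
  assumes f: "f \<in> Aut"
  shows "inv_into UNIV (\<iota> f) = \<iota> (inv_into UNIV f)"
proof (rule inv_unique_comp)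
  show "\<iota> f \<circ> \<iota> (inv_into UNIV f) = id" "\<iota> (inv_into UNIV f) \<circ> \<iota> f = id"
    using iota_comp[OF f tree_aut_inv[OF f]] iota_comp[OF tree_aut_inv[OF f] f]
      permutes_inv_o[OF tree_autD(1)[OF f]] iota_id
    by simp_all
qed

lemma iota_hom: "\<iota> \<in> hom (aut_group n p A) (sym_group n)"
  unfolding hom_def aut_group_def sym_group_def using iota_permutes iota_comp by auto

section \<open>The subgroup W_h1 and its normalisation by \<iota>(Aut)\<close>

lemma Wh1D: "w \<in> W \<Longrightarrow> w permutes {1..n}" "w \<in> W \<Longrightarrow> L \<in> P 1 \<Longrightarrow> w ` L \<subseteq> L"
  unfolding Wh1_def by auto

lemma Wh1_image_eq:
  assumes w: "w \<in> W" and M: "(l, M) \<in> N"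
  shows "w ` M = M"
proof -
  have l: "M \<in> P l" "1 \<le> l"
    using M tree_nodes_iff by auto
  have "w a \<in> M" if a: "a \<in> M" for a
  proof -
    have a': "a \<in> {1..n}"
      using a part_subset[OF l(1)] by blast
    then have "w a \<in> block 1 a"
      using Wh1D(2)[OF w block_in_part[OF a']] block_self[OF a'] by blast
    then show ?thesis
      using part_refines[OF block_in_part[OF a'] l(2) l(1) block_self[OF a'] a] by blast
  qed
  then show ?thesis
    using card_subset_eq[OF part_finite[OF l(1)]] card_image[OF permutes_inj_on[OF Wh1D(1)[OF w]]]
    by (metis image_subsetI)
qed

lemma id_in_Wh1: "id \<in> W"
  unfolding Wh1_def by simp

lemma Wh1_comp: "w \<in> W \<Longrightarrow> v \<in> W \<Longrightarrow> w \<circ> v \<in> W"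
  unfolding Wh1_def by (auto simp: permutes_compose image_subset_iff)

lemma Wh1_inv:
  assumes w: "w \<in> W"
  shows "inv_into UNIV w \<in> W"
proof -
  have "inv_into UNIV w ` L = L" if "L \<in> P 1" for L
  proof -
    have "w ` L = L"
      using Wh1_image_eq[OF w, of 1 L] that by (simp add: tree_nodes_iff)
    then show ?thesis
      using inv_into_image_cancel[OF permutes_inj[OF Wh1D(1)[OF w]], of L] by simp
  qed
  then show ?thesis
    unfolding Wh1_def using permutes_inv[OF Wh1D(1)[OF w]] by simp
qed

lemma iota_conj_in_Wh1:
  assumes f: "f \<in> Aut" and w: "w \<in> W"
  shows "\<iota> f \<circ> w \<circ> inv_into UNIV (\<iota> f) \<in> W"
proof -
  have perm: "\<iota> f permutes {1..n}"
    using iota_permutes[OF f] .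
  have "(\<iota> f \<circ> w \<circ> inv_into UNIV (\<iota> f)) ` L = L" if L: "L \<in> P 1" for L
  proof -
    have "inv_into UNIV (\<iota> f) ` L \<in> P 1"
      using iota_image_in_part[OF tree_aut_inv[OF f], of 1 L] iota_inv[OF f] L
      by (simp add: tree_nodes_iff)
    then have "w ` inv_into UNIV (\<iota> f) ` L = inv_into UNIV (\<iota> f) ` L"
      using Wh1_image_eq[OF w, of 1 "inv_into UNIV (\<iota> f) ` L"] by (simp add: tree_nodes_iff)
    then have "(\<iota> f \<circ> w \<circ> inv_into UNIV (\<iota> f)) ` L = \<iota> f ` inv_into UNIV (\<iota> f) ` L"
      by (simp only: image_comp[symmetric])
    then show ?thesis
      using image_inv_into_cancel[OF permutes_surj[OF perm]] by simp
  qed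
  then show ?thesis
    unfolding Wh1_def
    using permutes_compose[OF permutes_inv[OF perm] permutes_compose[OF Wh1D(1)[OF w] perm]]
    by (simp add: o_assoc)
qed

lemma iota_inv_conj_in_Wh1:
  assumes f: "f \<in> Aut" and w: "w \<in> W"
  shows "inv_into UNIV (\<iota> f) \<circ> w \<circ> \<iota> f \<in> W"
  using iota_conj_in_Wh1[OF tree_aut_inv[OF f] w] iota_inv[OF f]
    iota_inv[OF tree_aut_inv[OF f]] permutes_inv_inv[OF tree_autD(1)[OF f]]
  by simp

lemma iota_conj_image_Wh1:
  assumes f: "f \<in> Aut"
  shows "(\<lambda>w. \<iota> f \<circ> w \<circ> inv_into UNIV (\<iota> f)) ` W = W"
proof
  show "(\<lambda>w. \<iota> f \<circ> w \<circ> inv_into UNIV (\<iota> f)) ` W \<subseteq> W"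
    using iota_conj_in_Wh1[OF f] by blast
  show "W \<subseteq> (\<lambda>w. \<iota> f \<circ> w \<circ> inv_into UNIV (\<iota> f)) ` W"
  proof
    fix w assume w: "w \<in> W"
    have perm: "\<iota> f permutes {1..n}"
      using iota_permutes[OF f] .
    have "w = \<iota> f \<circ> (inv_into UNIV (\<iota> f) \<circ> w \<circ> \<iota> f) \<circ> inv_into UNIV (\<iota> f)"
      by (simp add: fun_eq_iff permutes_inverses[OF perm])
    then show "w \<in> (\<lambda>w. \<iota> f \<circ> w \<circ> inv_into UNIV (\<iota> f)) ` W"
      using iota_inv_conj_in_Wh1[OF f w] by blast
  qed
qed

lemma iota_image_Int_Wh1: "\<iota> ` Aut \<inter> W = {id}"
proof
  show "{id} \<subseteq> \<iota> ` Aut \<inter> W"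
    using id_in_tree_aut iota_id id_in_Wh1 by force
  show "\<iota> ` Aut \<inter> W \<subseteq> {id}"
  proof
    fix s assume "s \<in> \<iota> ` Aut \<inter> W"
    then obtain f where f: "f \<in> Aut" "\<iota> f \<in> W" "s = \<iota> f"
      by blast
    have "\<iota> f a = a" if a: "a \<in> {1..n}" for a
    proof -
      have "f (1, block 1 a) = (1, block 1 a)"
        using tree_aut_eq_iota_image[OF f(1)] Wh1_image_eq[OF f(2)] leaf_in_tree_nodes[OF a] by simp
      then show ?thesis
        using iota_eq_order_bij[OF a] order_bij_self[OF part_finite[OF block_in_part[OF a]] block_self[OF a]]
        by simp
    qed
    then show "s \<in> {id}"
      using f(3) iota_outside by fastforce
  qed
qed

end

section \<open>The stabiliser of U as the permutations preserving all P_l\<close>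

lemma perm_act_in_tspace:
  assumes s: "s permutes {1..n}" and x: "x \<in> tspace n"
  shows "perm_act s x \<in> tspace n"
proof -
  have s': "inv_into UNIV s permutes {1..n}"
    using permutes_inv[OF s] .
  then have "(\<Sum>a = 1..n. (x \<circ> inv_into UNIV s) a) = (\<Sum>a = 1..n. x a)"
    using sum.permute[OF s', of x] by simp
  then show ?thesis
    using x permutes_not_in[OF s'] unfolding tspace_def perm_act_def by auto
qed

context fission_tree
begin

lemma perm_act_Uspace_subset:
  assumes s: "s permutes {1..n}" and blocks: "\<forall>M \<in> P l. s ` M \<in> P l"
  shows "perm_act s ` U l \<subseteq> U l"
proof
  fix y assume "y \<in> perm_act s ` U l"
  then obtain x where x: "x \<in> U l" and y: "y = x \<circ> inv_into UNIV s"
    unfolding perm_act_def by blast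
  have "y a = y b" if M: "M \<in> P l" and ab: "a \<in> M" "b \<in> M" for M a b
  proof -
    let ?a = "inv_into UNIV s a"
    have a': "?a \<in> {1..n}"
      using permutes_in_image[OF permutes_inv[OF s]] part_subset[OF M] ab(1) by blast
    have "a \<in> s ` block l ?a"
      using block_self[OF a'] permutes_inverses(1)[OF s] by (metis image_eqI)
    then have "s ` block l ?a = M"
      using part_eqI[OF blocks[rule_format, OF block_in_part[OF a']] M _ ab(1)] by simp
    then have "inv_into UNIV s b \<in> block l ?a"
      using ab(2) permutes_inverses(2)[OF s] by auto
    then have "x ?a = x (inv_into UNIV s b)"
      using x block_in_part[OF a'] block_self[OF a'] unfolding Uspace_def by blast
    then show ?thesis
      using y by simp
  qed
  then show "y \<in> U l"
    using x perm_act_in_tspace[OF s] y unfolding Uspace_def perm_act_def by blast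
qed

lemma Uspace_separates_parts:
  assumes M1: "M1 \<in> P l" and M2: "M2 \<in> P l" and ne: "M1 \<noteq> M2"
  shows "\<exists>x \<in> U l. \<forall>a \<in> M1. \<forall>b \<in> M2. x a \<noteq> x b"
proof -
  have disj: "M1 \<inter> M2 = {}"
    using part_eqI[OF M1 M2] ne by blast
  define c1 where "c1 = card M1"
  define c2 where "c2 = card M2"
  have c: "c1 > 0" "c2 > 0"
    using part_finite part_nonempty M1 M2 c1_def c2_def by (auto simp: card_gt_0_iff)
  define x :: "nat \<Rightarrow> complex" where
    "x = (\<lambda>a. (if a \<in> M1 then of_nat c2 else 0) - (if a \<in> M2 then of_nat c1 else 0))"
  have "(\<Sum>a = 1..n. if a \<in> M then (of_nat c :: complex) else 0) = of_nat (card M) * of_nat c"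
    if "M \<in> P l" for M c
    using sum.inter_restrict[of "{1..n}" "\<lambda>_. (of_nat c :: complex)" M, symmetric]
      Int_absorb1[OF part_subset[OF that]]
    by (simp add: Int_commute)
  then have "(\<Sum>a = 1..n. x a) = 0"
    unfolding x_def sum_subtractf using M1 M2 c1_def c2_def by simp
  moreover have "x a = 0" if "a \<notin> {1..n}" for a
    using that part_subset[OF M1] part_subset[OF M2] unfolding x_def by auto
  moreover have "x a = x b" if M: "M \<in> P l" and ab: "a \<in> M" "b \<in> M" for M a b
  proof -
    have "M = M1 \<or> M \<inter> M1 = {}" "M = M2 \<or> M \<inter> M2 = {}"
      using part_eqI[OF M M1] part_eqI[OF M M2] by blast+
    then show ?thesis
      using ab disj unfolding x_def by auto
  qed
  ultimately have "x \<in> U l"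
    unfolding Uspace_def tspace_def by blast
  moreover have "x a \<noteq> x b" if "a \<in> M1" "b \<in> M2" for a b
  proof
    assume "x a = x b"
    moreover have "a \<notin> M2" "b \<notin> M1"
      using that disj by auto
    ultimately have "(of_nat c2 :: complex) = - of_nat c1"
      using that unfolding x_def by simp
    then have "(of_nat (c1 + c2) :: complex) = 0"
      by simp
    then show False
      using c by (simp only: of_nat_eq_0_iff)
  qed
  ultimately show ?thesis
    by blast
qed

lemma part_image_if_perm_act_Uspace_subset:
  assumes s: "s permutes {1..n}" and stable: "perm_act s ` U l \<subseteq> U l" and M: "M \<in> P l"
  shows "s ` M \<in> P l"
proof -
  let ?s' = "inv_into UNIV s"
  have inv_rel: "(?s' a, ?s' b) \<in> R l" if ab: "(a, b) \<in> R l" for a b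
  proof (rule ccontr)
    assume not_rel: "(?s' a, ?s' b) \<notin> R l"
    have "a \<in> {1..n}" "b \<in> {1..n}"
      using ab lev_rel_subset by blast+
    then have a: "a \<in> {1..n}" "?s' a \<in> {1..n}" "?s' b \<in> {1..n}"
      using permutes_in_image[OF permutes_inv[OF s]] by simp_all
    then have "block l (?s' a) \<noteq> block l (?s' b)"
      using not_rel block_self by blast
    then obtain x where x: "x \<in> U l"
      and sep: "\<forall>c \<in> block l (?s' a). \<forall>d \<in> block l (?s' b). x c \<noteq> x d"
      using Uspace_separates_parts[OF block_in_part[OF a(2)] block_in_part[OF a(3)]] by blast
    have "perm_act s x \<in> U l"
      using stable x by blast
    then have "perm_act s x a = perm_act s x b"
      using ab block_in_part[OF a(1)] block_self[OF a(1)] unfolding Uspace_def by blast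
    then show False
      using sep block_self[OF a(2)] block_self[OF a(3)] unfolding perm_act_def by simp
  qed
  \<comment> \<open>An injective self-map of the finite set R l is onto, so s preserves R l as well.\<close>
  have onto: "(\<lambda>(a, b). (?s' a, ?s' b)) ` R l = R l"
  proof (rule endo_inj_surj)
    show "finite (R l)"
      using lev_rel_subset finite_subset by blast
    show "inj_on (\<lambda>(a, b). (?s' a, ?s' b)) (R l)"
      using permutes_inj[OF permutes_inv[OF s]] by (intro inj_onI) (auto simp: inj_eq)
  qed (use inv_rel in auto)
  have rel: "(s a, s b) \<in> R l" if "(a, b) \<in> R l" for a b
  proof -
    have "(a, b) \<in> (\<lambda>(a, b). (?s' a, ?s' b)) ` R l"
      using that onto by simp
    then obtain c d where "(c, d) \<in> R l" "a = ?s' c" "b = ?s' d"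
      by auto
    then show ?thesis
      using permutes_inverses(1)[OF s] by simp
  qed
  obtain a where a: "a \<in> M"
    using part_nonempty[OF M] by blast
  have a': "a \<in> {1..n}"
    using part_subset[OF M] a by blast
  have "s ` M = block l (s a)"
  proof
    show "s ` M \<subseteq> block l (s a)"
      using rel part_eq_block[OF M a] by auto
    show "block l (s a) \<subseteq> s ` M"
    proof
      fix b assume "b \<in> block l (s a)"
      then have "?s' b \<in> M"
        using inv_rel[of "s a" b] part_eq_block[OF M a] permutes_inverses(2)[OF s] by simp
      then show "b \<in> s ` M"
        using permutes_inverses(1)[OF s] by (metis image_eqI)
    qed
  qed
  then show ?thesis
    using block_in_part permutes_in_image[OF s] a' by simp
qed

lemma stabU_iff:
  "s \<in> stabU n p A \<longleftrightarrow> s permutes {1..n} \<and> (\<forall>l M. (l, M) \<in> N \<longrightarrow> s ` M \<in> P l)"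
proof
  assume s: "s \<in> stabU n p A"
  then have perm: "s permutes {1..n}"
    unfolding stabU_def by blast
  have "s ` M \<in> P l" if "(l, M) \<in> N" for l M
  proof (cases "l = p + 1")
    case True
    then show ?thesis
      using that part_top permutes_image[OF perm] by (simp add: tree_nodes_iff)
  next
    case False
    then show ?thesis
      using that s part_image_if_perm_act_Uspace_subset[OF perm]
      by (auto simp: stabU_def tree_nodes_iff)
  qed
  with perm show "s permutes {1..n} \<and> (\<forall>l M. (l, M) \<in> N \<longrightarrow> s ` M \<in> P l)"
    by blast
next
  assume "s permutes {1..n} \<and> (\<forall>l M. (l, M) \<in> N \<longrightarrow> s ` M \<in> P l)"
  then show "s \<in> stabU n p A"
    unfolding stabU_def using perm_act_Uspace_subset by (auto simp: tree_nodes_iff)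
qed

definition induced_aut :: "(nat \<Rightarrow> nat) \<Rightarrow> nat \<times> nat set \<Rightarrow> nat \<times> nat set" where
  "induced_aut s x = (if x \<in> N then (fst x, s ` snd x) else x)"

lemma induced_aut_in_tree_aut:
  assumes s: "s \<in> stabU n p A"
  shows "induced_aut s \<in> Aut"
proof -
  have perm: "s permutes {1..n}" and blocks: "\<And>l M. (l, M) \<in> N \<Longrightarrow> s ` M \<in> P l"
    using s stabU_iff by blast+
  have "induced_aut s permutes N"
  proof (rule inj_imp_permutes)
    show "induced_aut s x \<in> N" if "x \<in> N" for x
      using that blocks unfolding induced_aut_def by (cases x) (simp add: tree_nodes_iff)
    show "inj_on (induced_aut s) N"
      using inj_image_eq_iff[OF permutes_inj[OF perm]]
      by (intro inj_onI) (auto simp: induced_aut_def prod_eq_iff)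
  qed (simp_all add: finite_tree_nodes induced_aut_def)
  moreover have "induced_aut s rt = rt"
    using root_in_tree_nodes permutes_image[OF perm] unfolding induced_aut_def tree_root_def by simp
  moreover have "par (induced_aut s x) = induced_aut s (par x)" if x: "x \<in> N" "x \<noteq> rt" for x
  proof -
    obtain l L where xl: "x = (l, L)" and L: "L \<in> P l"
      using x(1) by (cases x) (simp add: tree_nodes_iff)
    obtain a where a: "a \<in> L"
      using part_nonempty[OF L] by blast
    have a': "a \<in> {1..n}"
      using a part_subset[OF L] by blast
    have par_x: "par x = (l + 1, block (l + 1) a)" and par_in: "par x \<in> N"
      using tree_parent_eq_block[OF L a] tree_parent_node(1)[OF x] xl by simp_all
    have "s ` block (l + 1) a = block (l + 1) (s a)"
      using part_eq_block[OF blocks[OF par_in[unfolded par_x]]] block_self[OF a'] by blast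
    moreover have "par (l, s ` L) = (l + 1, block (l + 1) (s a))"
      using tree_parent_eq_block[OF blocks[OF x(1)[unfolded xl]]] a xl by simp
    ultimately show ?thesis
      using x(1) par_x par_in xl unfolding induced_aut_def by simp
  qed
  moreover have "card (snd (induced_aut s x)) = card (snd x)" if "x \<in> N" for x
    using that card_image[OF permutes_inj_on[OF perm]] unfolding induced_aut_def by simp
  ultimately show ?thesis
    unfolding tree_aut_def tree_rank_def by simp
qed

lemma iota_induced_aut_image:
  assumes s: "s \<in> stabU n p A" and L: "L \<in> P 1"
  shows "\<iota> (induced_aut s) ` L = s ` L"
proof -
  have "(1, L) \<in> N"
    using L by (simp add: tree_nodes_iff)
  then show ?thesis
    using tree_aut_eq_iota_image[OF induced_aut_in_tree_aut[OF s]] unfolding induced_aut_def by simp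
qed

end

section \<open>The semidirect product\<close>

lemma group_if_inj_hom_into_group:
  assumes H: "group H" and h: "h \<in> hom G H" and inj: "inj_on h (carrier G)"
    and closed: "\<And>x y. x \<in> carrier G \<Longrightarrow> y \<in> carrier G \<Longrightarrow> x \<otimes>\<^bsub>G\<^esub> y \<in> carrier G"
    and one: "\<one>\<^bsub>G\<^esub> \<in> carrier G" "h \<one>\<^bsub>G\<^esub> = \<one>\<^bsub>H\<^esub>"
    and inverse: "\<And>x. x \<in> carrier G \<Longrightarrow> \<exists>y \<in> carrier G. h y \<otimes>\<^bsub>H\<^esub> h x = \<one>\<^bsub>H\<^esub>"
  shows "group G"
proof (rule groupI)
  have h_mult: "h (x \<otimes>\<^bsub>G\<^esub> y) = h x \<otimes>\<^bsub>H\<^esub> h y" if "x \<in> carrier G" "y \<in> carrier G" for x y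
    using h that by (simp add: hom_mult)
  have h_carrier: "h x \<in> carrier H" if "x \<in> carrier G" for x
    using h that by (simp add: hom_in_carrier)
  show "(x \<otimes>\<^bsub>G\<^esub> y) \<otimes>\<^bsub>G\<^esub> z = x \<otimes>\<^bsub>G\<^esub> (y \<otimes>\<^bsub>G\<^esub> z)"
    if "x \<in> carrier G" "y \<in> carrier G" "z \<in> carrier G" for x y z
    using inj_onD[OF inj] that closed h_mult h_carrier group.is_monoid[OF H] by (simp add: monoid.m_assoc)
  show "\<one>\<^bsub>G\<^esub> \<otimes>\<^bsub>G\<^esub> x = x" if "x \<in> carrier G" for x
    using inj_onD[OF inj] that closed one h_mult h_carrier group.is_monoid[OF H] by simp
  show "\<exists>y \<in> carrier G. y \<otimes>\<^bsub>G\<^esub> x = \<one>\<^bsub>G\<^esub>" if "x \<in> carrier G" for x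
    using inverse[OF that] inj_onD[OF inj] that closed one h_mult by metis
qed (use closed one in auto)

context fission_tree
begin

abbreviation "S \<equiv> semidirect n p A"
abbreviation "\<Phi> \<equiv> semidirect_map n p A"

lemma semidirect_mult:
  "(f, w) \<otimes>\<^bsub>S\<^esub> (f', w') = (f \<circ> f', (inv_into UNIV (\<iota> f') \<circ> w \<circ> \<iota> f') \<circ> w')"
  unfolding semidirect_def by simp

lemma semidirect_map_eq: "\<Phi> (f, w) = \<iota> f \<circ> w"
  unfolding semidirect_map_def by simp

lemma semidirect_closed:
  "x \<in> carrier S \<Longrightarrow> y \<in> carrier S \<Longrightarrow> x \<otimes>\<^bsub>S\<^esub> y \<in> carrier S"
  by (auto simp: semidirect_def tree_aut_comp Wh1_comp iota_inv_conj_in_Wh1)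

lemma semidirect_map_hom: "\<Phi> \<in> hom S (sym_group n)"
proof (rule homI)
  fix x assume "x \<in> carrier S"
  then show "\<Phi> x \<in> carrier (sym_group n)"
    using permutes_compose[OF Wh1D(1) iota_permutes]
    by (auto simp: semidirect_def semidirect_map_eq sym_group_carrier)
next
  fix x y assume "x \<in> carrier S" "y \<in> carrier S"
  then obtain f w f' w' where xy: "x = (f, w)" "y = (f', w')" "f \<in> Aut" "f' \<in> Aut"
    by (auto simp: semidirect_def)
  have "\<Phi> (x \<otimes>\<^bsub>S\<^esub> y) = \<iota> f \<circ> (\<iota> f' \<circ> inv_into UNIV (\<iota> f')) \<circ> w \<circ> \<iota> f' \<circ> w'"
    using iota_comp[OF xy(3,4)] by (simp add: xy semidirect_mult semidirect_map_eq o_assoc)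
  then show "\<Phi> (x \<otimes>\<^bsub>S\<^esub> y) = \<Phi> x \<otimes>\<^bsub>sym_group n\<^esub> \<Phi> y"
    using permutes_inv_o(1)[OF iota_permutes[OF xy(4)]]
    by (simp add: xy semidirect_map_eq sym_group_mult o_assoc)
qed

lemma inj_on_semidirect_map: "inj_on \<Phi> (carrier S)"
proof (rule inj_onI)
  fix x y assume "x \<in> carrier S" "y \<in> carrier S" and eq: "\<Phi> x = \<Phi> y"
  then obtain f w g v where xy: "x = (f, w)" "y = (g, v)" and f: "f \<in> Aut" "w \<in> W"
    and g: "g \<in> Aut" "v \<in> W"
    by (auto simp: semidirect_def)
  have w_perm: "w permutes {1..n}" and g_perm: "\<iota> g permutes {1..n}"
    using Wh1D(1)[OF f(2)] iota_permutes[OF g(1)] .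
  let ?h = "inv_into UNIV g \<circ> f"
  have h: "?h \<in> Aut"
    using tree_aut_comp[OF tree_aut_inv[OF g(1)] f(1)] .
  have "\<iota> ?h = inv_into UNIV (\<iota> g) \<circ> \<iota> f"
    using iota_comp[OF tree_aut_inv[OF g(1)] f(1)] iota_inv[OF g(1)] by simp
  also have "\<dots> = inv_into UNIV (\<iota> g) \<circ> (\<iota> f \<circ> w) \<circ> inv_into UNIV w"
    by (simp add: comp_assoc permutes_inv_o(1)[OF w_perm])
  also have "\<dots> = inv_into UNIV (\<iota> g) \<circ> (\<iota> g \<circ> v) \<circ> inv_into UNIV w"
    using eq xy by (simp add: semidirect_map_eq)
  also have "\<dots> = v \<circ> inv_into UNIV w"
    by (simp add: o_assoc permutes_inv_o(2)[OF g_perm])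
  finally have "\<iota> ?h \<in> \<iota> ` Aut \<inter> W"
    using h Wh1_comp[OF g(2) Wh1_inv[OF f(2)]] by (metis IntI image_eqI)
  then have "\<iota> ?h = \<iota> id"
    using iota_image_Int_Wh1 iota_id by simp
  then have h_id: "?h = id"
    using inj_onD[OF inj_on_iota _ h id_in_tree_aut] by blast
  have "f = (g \<circ> inv_into UNIV g) \<circ> f"
    using permutes_inv_o(1)[OF tree_autD(1)[OF g(1)]] by simp
  also have "\<dots> = g"
    using h_id by (simp add: comp_assoc)
  finally have "f = g" .
  moreover have "w = v"
    using eq xy permutes_inj[OF iota_permutes[OF f(1)]] \<open>f = g\<close>
    by (simp add: semidirect_map_eq fun_eq_iff inj_eq)
  ultimately show "x = y"
    using xy by simp
qed

lemma group_semidirect: "group S"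
proof (rule group_if_inj_hom_into_group[OF sym_group_is_group semidirect_map_hom inj_on_semidirect_map])
  show "\<one>\<^bsub>S\<^esub> \<in> carrier S" "\<Phi> \<one>\<^bsub>S\<^esub> = \<one>\<^bsub>sym_group n\<^esub>"
    by (simp_all add: semidirect_def semidirect_map_eq sym_group_one id_in_tree_aut id_in_Wh1 iota_id)
  show "\<exists>y \<in> carrier S. \<Phi> y \<otimes>\<^bsub>sym_group n\<^esub> \<Phi> x = \<one>\<^bsub>sym_group n\<^esub>"
    if x_in: "x \<in> carrier S" for x
  proof -
    obtain f w where x: "x = (f, w)" "f \<in> Aut" "w \<in> W"
      using x_in by (cases x) (auto simp: semidirect_def)
    let ?y = "(inv_into UNIV f, \<iota> f \<circ> inv_into UNIV w \<circ> inv_into UNIV (\<iota> f))"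
    have "?y \<in> carrier S"
      using tree_aut_inv[OF x(2)] iota_conj_in_Wh1[OF x(2) Wh1_inv[OF x(3)]] by (simp add: semidirect_def)
    moreover have "\<Phi> ?y \<circ> \<Phi> x = id"
      using permutes_inverses[OF iota_permutes[OF x(2)]] permutes_inverses[OF Wh1D(1)[OF x(3)]]
      by (simp add: x semidirect_map_eq iota_inv[OF x(2), symmetric] fun_eq_iff)
    ultimately show ?thesis
      by (auto simp: sym_group_mult sym_group_one)
  qed
qed (rule semidirect_closed)

lemma semidirect_map_image: "\<Phi> ` carrier S = stabU n p A"
proof
  show "\<Phi> ` carrier S \<subseteq> stabU n p A"
  proof
    fix s assume "s \<in> \<Phi> ` carrier S"
    then obtain f w where s: "s = \<iota> f \<circ> w" and f: "f \<in> Aut" and w: "w \<in> W"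
      by (auto simp: semidirect_def semidirect_map_eq)
    have "s ` M \<in> P l" if "(l, M) \<in> N" for l M
    proof -
      have "s ` M = \<iota> f ` w ` M"
        unfolding s by (rule image_comp[symmetric])
      then show ?thesis
        using iota_image_in_part[OF f that] Wh1_image_eq[OF w that] by simp
    qed
    then show "s \<in> stabU n p A"
      using permutes_compose[OF Wh1D(1)[OF w] iota_permutes[OF f]] s stabU_iff by blast
  qed
  show "stabU n p A \<subseteq> \<Phi> ` carrier S"
  proof
    fix s assume s: "s \<in> stabU n p A"
    let ?f = "induced_aut s"
    let ?w = "inv_into UNIV (\<iota> ?f) \<circ> s"
    have f: "?f \<in> Aut"
      using induced_aut_in_tree_aut[OF s] .
    have perm: "\<iota> ?f permutes {1..n}" "s permutes {1..n}"
      using iota_permutes[OF f] s stabU_iff by blast+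
    have "?w ` L \<subseteq> L" if "L \<in> P 1" for L
    proof -
      have "?w ` L = inv_into UNIV (\<iota> ?f) ` s ` L"
        by (rule image_comp[symmetric])
      then show ?thesis
        using iota_induced_aut_image[OF s that] inv_into_image_cancel[OF permutes_inj[OF perm(1)], of L]
        by simp
    qed
    then have "?w \<in> W"
      unfolding Wh1_def using permutes_compose[OF perm(2) permutes_inv[OF perm(1)]] by blast
    moreover have "\<Phi> (?f, ?w) = s"
      using permutes_inv_o(1)[OF perm(1)] by (simp add: semidirect_map_eq o_assoc)
    ultimately show "s \<in> \<Phi> ` carrier S"
      using f by (force simp: semidirect_def)
  qed
qed

end

theorem proposition4p15:
  fixes n p :: nat and A :: "nat \<Rightarrow> nat \<Rightarrow> complex"
  assumes "n \<ge> 2" and "p \<ge> 1"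
    and "\<forall>j \<in> {1..p}. A j \<in> tspace n"
  shows "group (aut_group n p A)
    \<and> iota n p A \<in> hom (aut_group n p A) (sym_group n)
    \<and> inj_on (iota n p A) (tree_aut n p A)
    \<and> iota n p A ` tree_aut n p A \<subseteq> stabU n p A
    \<and> iota n p A ` tree_aut n p A \<inter> Wh1 n p A = {id}
    \<and> (\<forall>f \<in> tree_aut n p A.
         (\<lambda>w. iota n p A f \<circ> w \<circ> inv_into UNIV (iota n p A f)) ` Wh1 n p A = Wh1 n p A)
    \<and> group (semidirect n p A)
    \<and> semidirect_map n p A \<in> hom (semidirect n p A) (sym_group n)
    \<and> inj_on (semidirect_map n p A) (carrier (semidirect n p A))
    \<and> semidirect_map n p A ` carrier (semidirect n p A) = stabU n p A"
proof -
  interpret fission_tree n p A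
    using assms(1) by unfold_locales simp
  have "\<iota> ` Aut \<subseteq> stabU n p A"
  proof
    fix s assume "s \<in> \<iota> ` Aut"
    then obtain f where "f \<in> Aut" "s = \<Phi> (f, id)"
      by (auto simp: semidirect_map_eq)
    then show "s \<in> stabU n p A"
      using semidirect_map_image id_in_Wh1 by (auto simp: semidirect_def)
  qed
  then show ?thesis
    using group_aut_group iota_hom inj_on_iota iota_image_Int_Wh1 iota_conj_image_Wh1
      group_semidirect semidirect_map_hom inj_on_semidirect_map semidirect_map_image
    by blast
qed

end
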